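(* Let $G$ be a finite, non-empty, connected, simple undirected graph, and run the Greedy Radial Partitioning procedure described in the context on $G$. Then the procedure terminates, the sets $\mathcal V_1,\ldots,\mathcal V_m$ it returns form a partition of the vertex set of $G$, and for each $k$ the subgraph of $G$ induced by $\mathcal V_k$ is a tree.
   Context: Greedy Radial Partitioning procedure. Set $k=1$ and let $H:=G$. START: set $\mathcal V_k=\emptyset$ and let $S$ be an empty stack whose entries are pairs (node, parent). Select an arbitrary (e.g. random) node $v$ of $H$, set $\mathcal V_k\gets\{v\}$, and push every neighbor of $v$ in $H$ onto $S$ with parent $v$. While $S$ is non-empty: pop an entry $(u,p)$ from $S$; if no neighbor of $u$ in $H$ other than its parent $p$ belongs to $\mathcal V_k$, then set $\mathcal V_k\gets\mathcal V_k\cup\{u\}$ and push every neighbor of $u$ in $H$ that is not in $\mathcal V_k$ onto $S$ with parent $u$. When $S$ is empty, save $\mathcal V_k$ as a part, delete the vertices of $\mathcal V_k$ from $H$ (i.e. replace $H$ by the subgraph induced on the remaining vertices); if $H$ is non-empty, set $k\gets k+1$ and go to START; otherwise return all saved sets $\mathcal V_1,\ldots,\mathcal V_m$. A partition of the vertex set in which each part induces a tree is called a radial partitioning. *)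

theory Defs
  imports Main
begin

definition simple_graph :: "'a set \<Rightarrow> ('a \<Rightarrow> 'a \<Rightarrow> bool) \<Rightarrow> bool" where
  "simple_graph V E \<longleftrightarrow> finite V \<and> (\<forall>x y. E x y \<longrightarrow> x \<in> V \<and> y \<in> V)
     \<and> (\<forall>x y. E x y \<longrightarrow> E y x) \<and> (\<forall>x. \<not> E x x)"

definition induced_connected :: "('a \<Rightarrow> 'a \<Rightarrow> bool) \<Rightarrow> 'a set \<Rightarrow> bool" where
  "induced_connected E S \<longleftrightarrow>
     (\<forall>x\<in>S. \<forall>y\<in>S. (x, y) \<in> {(a, b). a \<in> S \<and> b \<in> S \<and> E a b}\<^sup>*)"

definition induced_cycle :: "('a \<Rightarrow> 'a \<Rightarrow> bool) \<Rightarrow> 'a set \<Rightarrow> 'a list \<Rightarrow> bool" where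
  "induced_cycle E S c \<longleftrightarrow> length c \<ge> 3 \<and> distinct c \<and> set c \<subseteq> S
     \<and> (\<forall>i. Suc i < length c \<longrightarrow> E (c ! i) (c ! Suc i))
     \<and> E (last c) (hd c)"

definition induced_tree :: "('a \<Rightarrow> 'a \<Rightarrow> bool) \<Rightarrow> 'a set \<Rightarrow> bool" where
  "induced_tree E S \<longleftrightarrow> S \<noteq> {} \<and> induced_connected E S \<and> (\<nexists>c. induced_cycle E S c)"

definition is_partition_list :: "'a set \<Rightarrow> 'a set list \<Rightarrow> bool" where
  "is_partition_list V Ps \<longleftrightarrow> (\<forall>P\<in>set Ps. P \<noteq> {})
     \<and> (\<forall>i j. i < j \<and> j < length Ps \<longrightarrow> Ps ! i \<inter> Ps ! j = {})
     \<and> \<Union>(set Ps) = V"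

text \<open>Idle H Ps: at START, with remaining graph H (vertex set) and saved parts Ps.
  Build H Ps Vk S: building the current part Vk with stack S (head = top),
  entries (node, parent).\<close>
datatype 'a grp_state =
    Idle "'a set" "'a set list"
  | Build "'a set" "'a set list" "'a set" "('a \<times> 'a) list"

text \<open>One step of the procedure (nondeterministic: the start vertex and the
  order in which neighbours are pushed are arbitrary). The current graph H is the
  subgraph of G induced on the vertex set H.\<close>
inductive grp_step :: "('a \<Rightarrow> 'a \<Rightarrow> bool) \<Rightarrow> 'a grp_state \<Rightarrow> 'a grp_state \<Rightarrow> bool"
  for E :: "'a \<Rightarrow> 'a \<Rightarrow> bool" where
  start: "\<lbrakk> v \<in> H; distinct L; set L = {(w, v) | w. w \<in> H \<and> E v w} \<rbrakk>
          \<Longrightarrow> grp_step E (Idle H Ps) (Build H Ps {v} L)"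
| pop_add: "\<lbrakk> \<forall>w\<in>H. E u w \<and> w \<noteq> p \<longrightarrow> w \<notin> Vk; distinct L;
             set L = {(w, u) | w. w \<in> H \<and> E u w \<and> w \<notin> insert u Vk} \<rbrakk>
          \<Longrightarrow> grp_step E (Build H Ps Vk ((u, p) # S)) (Build H Ps (insert u Vk) (L @ S))"
| pop_skip: "\<not> (\<forall>w\<in>H. E u w \<and> w \<noteq> p \<longrightarrow> w \<notin> Vk)
          \<Longrightarrow> grp_step E (Build H Ps Vk ((u, p) # S)) (Build H Ps Vk S)"
| finish: "grp_step E (Build H Ps Vk []) (Idle (H - Vk) (Ps @ [Vk]))"

end

theory Submission
  imports Defs
begin

(* The procedure is a depth-first search that accepts a popped node only if its parent is its
   sole neighbour in the current part, so every part grows by attaching leaves and remains an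
   induced tree; the finished parts are disjoint and exhaust V.  Every step decreases, in the
   lexicographic order, the number of remaining vertices, the phase (Idle above Build), the number
   of remaining vertices outside the current part and the stack length.  For an accepting pop this
   relies on the popped node being new: a stack entry whose node already lies in the part always
   has a second neighbour there. *)

lemma simple_graphD:
  assumes "simple_graph V E"
  shows "finite V" "E x y \<Longrightarrow> x \<in> V" "E x y \<Longrightarrow> y \<in> V" "E x y \<Longrightarrow> E y x" "\<not> E x x"
  using assms unfolding simple_graph_def by blast+

lemma induced_cycle_adjacent:
  assumes "induced_cycle E S c" "i < length c"
  shows "E (c ! i) (c ! (Suc i mod length c))"
proof (cases "Suc i < length c")
  case True
  then show ?thesis using assms unfolding induced_cycle_def by simp
next
  case False
  then have "i = length c - 1" "c \<noteq> []" using assms(2) by auto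
  moreover have "E (last c) (hd c)" using assms(1) unfolding induced_cycle_def by simp
  ultimately show ?thesis by (simp add: last_conv_nth hd_conv_nth)
qed

lemma induced_cycle_two_neighbours:
  assumes c: "induced_cycle E S c" and x: "x \<in> set c"
  obtains a b where "a \<in> set c" "b \<in> set c" "a \<noteq> b" "E x a" "E b x"
proof -
  let ?n = "length c"
  obtain i where i: "i < ?n" "c ! i = x" using x by (meson in_set_conv_nth)
  have n: "?n \<ge> 3" "distinct c" using c unfolding induced_cycle_def by auto
  define j where "j = (if i = 0 then ?n - 1 else i - 1)"
  have j: "j < ?n" "Suc j mod ?n = i" "Suc i mod ?n \<noteq> j"
    using i n unfolding j_def by (auto simp: mod_Suc)
  have succ: "Suc i mod ?n < ?n" using i(1) by (intro mod_less_divisor) auto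
  have "c ! (Suc i mod ?n) \<noteq> c ! j"
    using n succ j by (simp add: nth_eq_iff_index_eq del: mod_Suc)
  moreover have "E x (c ! (Suc i mod ?n))" "E (c ! j) x"
    using induced_cycle_adjacent[OF c] i j by metis+
  ultimately show ?thesis using that succ j(1) by (metis nth_mem)
qed

lemma induced_tree_singleton: "induced_tree E {v}"
proof -
  have "\<not> induced_cycle E {v} c" for c
  proof
    assume "induced_cycle E {v} c"
    then have "length c \<ge> 3" "distinct c" "set c \<subseteq> {v}" unfolding induced_cycle_def by auto
    then show False using card_mono[of "{v}" "set c"] by (simp add: distinct_card)
  qed
  then show ?thesis unfolding induced_tree_def induced_connected_def by auto
qed

lemma induced_connected_insert_leaf:
  assumes S: "induced_connected E S" and p: "p \<in> S" and "E u p" "E p u"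
  shows "induced_connected E (insert u S)"
proof -
  let ?R = "{(a, b). a \<in> insert u S \<and> b \<in> insert u S \<and> E a b}"
  have "{(a, b). a \<in> S \<and> b \<in> S \<and> E a b}\<^sup>* \<subseteq> ?R\<^sup>*" by (rule rtrancl_mono) auto
  then have in_S: "(x, y) \<in> ?R\<^sup>*" if "x \<in> S" "y \<in> S" for x y
    using S that unfolding induced_connected_def by blast
  have to_p: "(x, p) \<in> ?R\<^sup>* \<and> (p, x) \<in> ?R\<^sup>*" if "x \<in> insert u S" for x
  proof (cases "x = u")
    case True
    have "(u, p) \<in> ?R" "(p, u) \<in> ?R" using p \<open>E u p\<close> \<open>E p u\<close> by auto
    then show ?thesis using True by blast
  next
    case False
    then show ?thesis using that p in_S by blast
  qed
  show ?thesis
    unfolding induced_connected_def using to_p by (meson rtrancl_trans)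
qed

lemma induced_tree_insert_leaf:
  assumes G: "simple_graph V E" and S: "induced_tree E S"
    and p: "p \<in> S" and "E u p" and leaf: "\<forall>w\<in>S. E u w \<longrightarrow> w = p"
  shows "induced_tree E (insert u S)"
proof -
  note sym = simple_graphD(4)[OF G] and irrefl = simple_graphD(5)[OF G]
  have "induced_connected E (insert u S)"
    using S p \<open>E u p\<close> sym unfolding induced_tree_def
    by (blast intro: induced_connected_insert_leaf)
  moreover have "\<not> induced_cycle E (insert u S) c" for c
  proof
    assume c: "induced_cycle E (insert u S) c"
    show False
    proof (cases "u \<in> set c")
      case True
      \<comment> \<open>both cycle neighbours of u would have to be p\<close>
      obtain a b where "a \<in> set c" "b \<in> set c" "a \<noteq> b" "E u a" "E b u"
        using c True by (rule induced_cycle_two_neighbours)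
      moreover have "set c \<subseteq> insert u S" using c unfolding induced_cycle_def by simp
      ultimately show False using leaf sym irrefl by blast
    next
      case False
      then have "induced_cycle E S c" using c unfolding induced_cycle_def by auto
      then show False using S unfolding induced_tree_def by blast
    qed
  qed
  ultimately show ?thesis unfolding induced_tree_def by blast
qed

lemma is_partition_list_snoc:
  assumes "is_partition_list A Ps" "B \<noteq> {}" "A \<inter> B = {}"
  shows "is_partition_list (A \<union> B) (Ps @ [B])"
proof -
  have "Ps ! i \<inter> B = {}" if "i < length Ps" for i
    using assms(1,3) nth_mem[OF that] unfolding is_partition_list_def by blast
  then show ?thesis
    using assms unfolding is_partition_list_def
    by (auto simp: nth_append less_Suc_eq)
qed

definition radial_partition :: "('a \<Rightarrow> 'a \<Rightarrow> bool) \<Rightarrow> 'a set \<Rightarrow> 'a set list \<Rightarrow> bool" where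
  "radial_partition E V Ps \<longleftrightarrow> is_partition_list V Ps \<and> (\<forall>P\<in>set Ps. induced_tree E P)"

lemma radial_partition_Nil: "radial_partition E {} []"
  unfolding radial_partition_def is_partition_list_def by simp

lemma radial_partition_snoc:
  assumes "radial_partition E A Ps" "induced_tree E B" "A \<inter> B = {}"
  shows "radial_partition E (A \<union> B) (Ps @ [B])"
proof -
  have "B \<noteq> {}" using assms(2) unfolding induced_tree_def by blast
  then show ?thesis
    using assms is_partition_list_snoc[of A Ps B] unfolding radial_partition_def by simp
qed

fun grp_stack_entry :: "('a \<Rightarrow> 'a \<Rightarrow> bool) \<Rightarrow> 'a set \<Rightarrow> 'a set \<Rightarrow> 'a \<times> 'a \<Rightarrow> bool" where
  "grp_stack_entry E H Vk (u, p) \<longleftrightarrow>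
     u \<in> H \<and> p \<in> Vk \<and> E p u \<and> (u \<in> Vk \<longrightarrow> (\<exists>w\<in>Vk. E u w \<and> w \<noteq> p))"

fun grp_invariant :: "'a set \<Rightarrow> ('a \<Rightarrow> 'a \<Rightarrow> bool) \<Rightarrow> 'a grp_state \<Rightarrow> bool" where
  "grp_invariant V E (Idle H Ps) \<longleftrightarrow> H \<subseteq> V \<and> radial_partition E (V - H) Ps"
| "grp_invariant V E (Build H Ps Vk S) \<longleftrightarrow> H \<subseteq> V \<and> radial_partition E (V - H) Ps
     \<and> Vk \<subseteq> H \<and> induced_tree E Vk \<and> distinct S \<and> (\<forall>e\<in>set S. grp_stack_entry E H Vk e)"

lemma grp_accepted_node_is_new_leaf:
  assumes G: "simple_graph V E" and inv: "grp_invariant V E (Build H Ps Vk ((u, p) # S))"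
    and accept: "\<forall>w\<in>H. E u w \<and> w \<noteq> p \<longrightarrow> w \<notin> Vk"
  shows "u \<in> H - Vk" "p \<in> Vk" "E u p" "\<forall>w\<in>Vk. E u w \<longrightarrow> w = p"
  using inv accept simple_graphD(4)[OF G] by auto

lemma grp_invariant_pop_add:
  assumes G: "simple_graph V E" and inv: "grp_invariant V E (Build H Ps Vk ((u, p) # S))"
    and accept: "\<forall>w\<in>H. E u w \<and> w \<noteq> p \<longrightarrow> w \<notin> Vk"
    and L: "distinct L" "set L = {(w, u) | w. w \<in> H \<and> E u w \<and> w \<notin> insert u Vk}"
  shows "grp_invariant V E (Build H Ps (insert u Vk) (L @ S))"
proof -
  note new_leaf = grp_accepted_node_is_new_leaf[OF G inv accept]
  have old: "H \<subseteq> V" "radial_partition E (V - H) Ps" "Vk \<subseteq> H" "induced_tree E Vk"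
    "distinct ((u, p) # S)" "\<forall>e\<in>set S. grp_stack_entry E H Vk e"
    using inv by auto
  have tree: "induced_tree E (insert u Vk)"
    using old(4) new_leaf by (auto intro: induced_tree_insert_leaf[OF G])
  have "\<forall>(x, q)\<in>set L. q = u" unfolding L(2) by auto
  moreover have "\<forall>(x, q)\<in>set S. q \<in> Vk" using old(6) by auto
  ultimately have "set L \<inter> set S = {}" using new_leaf(1) by fastforce
  then have "distinct (L @ S)" using L(1) old(5) by simp
  moreover have "\<forall>e\<in>set L. grp_stack_entry E H (insert u Vk) e"
    unfolding L(2) by auto
  moreover have "\<forall>e\<in>set S. grp_stack_entry E H (insert u Vk) e"
  proof (intro ballI)
    fix e assume e: "e \<in> set S"
    obtain x q where xq: "e = (x, q)" by fastforce
    have entry: "grp_stack_entry E H Vk (x, q)" using old(6) e xq by blast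
    show "grp_stack_entry E H (insert u Vk) e"
    proof (cases "x = u")
      case True
      then have "q \<noteq> p" using old(5) e xq by auto
      then show ?thesis using True entry new_leaf(2,3) xq by auto
    next
      case False
      then show ?thesis using entry xq by auto
    qed
  qed
  ultimately show ?thesis using old(1-3) tree new_leaf(1) by (simp add: ball_Un)
qed

lemma grp_step_invariant:
  assumes G: "simple_graph V E" and inv: "grp_invariant V E s" and step: "grp_step E s t"
  shows "grp_invariant V E t"
  using step
proof cases
  case (start v H L Ps)
  then show ?thesis using inv simple_graphD(5)[OF G] induced_tree_singleton by auto
next
  case (pop_add H u p Vk L Ps S)
  then show ?thesis using grp_invariant_pop_add[OF G] inv by simp
next
  case (pop_skip u H p Vk Ps S)
  then show ?thesis using inv by auto
next
  case (finish H Ps Vk)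
  then have "V - (H - Vk) = (V - H) \<union> Vk" "(V - H) \<inter> Vk = {}" using inv by auto
  then show ?thesis using inv finish radial_partition_snoc by fastforce
qed

fun grp_key :: "'a grp_state \<Rightarrow> nat \<times> nat \<times> nat \<times> nat" where
  "grp_key (Idle H Ps) = (card H, 1, 0, 0)"
| "grp_key (Build H Ps Vk S) = (card H, 0, card (H - Vk), length S)"

definition grp_less :: "('a grp_state \<times> 'a grp_state) set" where
  "grp_less = inv_image (less_than <*lex*> less_than <*lex*> less_than <*lex*> less_than) grp_key"

lemma wf_grp_less: "wf grp_less"
  unfolding grp_less_def by (intro wf_inv_image wf_lex_prod wf_less_than)

lemma grp_step_decreasing:
  assumes G: "simple_graph V E" and inv: "grp_invariant V E s" and step: "grp_step E s t"
  shows "(t, s) \<in> grp_less"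
  using step
proof cases
  case (start v H L Ps)
  then show ?thesis unfolding grp_less_def by simp
next
  case (pop_add H u p Vk L Ps S)
  have "H \<subseteq> V" using inv pop_add(1) by simp
  then have "finite (H - Vk)" using simple_graphD(1)[OF G] by (meson finite_Diff finite_subset)
  moreover have "u \<in> H - Vk"
    using grp_accepted_node_is_new_leaf[OF G inv[unfolded pop_add(1)] pop_add(3)] by blast
  ultimately have "card (H - insert u Vk) < card (H - Vk)"
    by (metis Diff_insert card_Diff1_less)
  then show ?thesis using pop_add unfolding grp_less_def by simp
next
  case (pop_skip u H p Vk Ps S)
  then show ?thesis unfolding grp_less_def by simp
next
  case (finish H Ps Vk)
  have "H \<subseteq> V" "Vk \<subseteq> H" "induced_tree E Vk" using inv finish(1) by simp_all
  then have "finite H" "Vk \<subseteq> H" "Vk \<noteq> {}"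
    using simple_graphD(1)[OF G] finite_subset unfolding induced_tree_def by blast+
  then have "H - Vk \<subset> H" by blast
  then have "card (H - Vk) < card H" using \<open>finite H\<close> by (rule psubset_card_mono[rotated])
  then show ?thesis using finish unfolding grp_less_def by simp
qed

lemma no_infinite_run_if_decreasing:
  assumes "wf R" "I s\<^sub>0" and "\<And>s t. I s \<Longrightarrow> step s t \<Longrightarrow> I t \<and> (t, s) \<in> R"
  shows "\<nexists>f. f 0 = s\<^sub>0 \<and> (\<forall>i. step (f i) (f (Suc i)))"
proof
  assume "\<exists>f. f 0 = s\<^sub>0 \<and> (\<forall>i. step (f i) (f (Suc i)))"
  then obtain f where f: "f 0 = s\<^sub>0" "\<And>i. step (f i) (f (Suc i))" by blast
  have I: "I (f i)" for i
    by (induction i) (use f assms(2,3) in auto)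
  have "(f (Suc i), f i) \<in> R" for i
    using assms(3)[OF I f(2)] by blast
  then show False using assms(1) unfolding wf_iff_no_infinite_down_chain by blast
qed

lemma obtain_neighbour_list:
  assumes "simple_graph V E" "\<And>w. P w \<Longrightarrow> E u w"
  obtains L where "distinct L" "set L = {(w, u) | w. P w}"
proof -
  have "{(w, u) | w. P w} \<subseteq> V \<times> {u}"
    using assms by (auto dest: simple_graphD(3))
  moreover have "finite (V \<times> {u})"
    using simple_graphD(1)[OF assms(1)] by simp
  ultimately have "finite {(w, u) | w. P w}" by (rule finite_subset)
  then have "\<exists>L. set L = {(w, u) | w. P w} \<and> distinct L" by (rule finite_distinct_list)
  then show ?thesis by (elim exE conjE) (rule that)
qed

lemma grp_progress:
  assumes G: "simple_graph V E"
  shows "(\<exists>t. grp_step E s t) \<or> (\<exists>Ps. s = Idle {} Ps)"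
proof (cases s)
  case (Idle H Ps)
  show ?thesis
  proof (cases "H = {}")
    case False
    then obtain v where "v \<in> H" by blast
    moreover obtain L where "distinct L" "set L = {(w, v) | w. w \<in> H \<and> E v w}"
      by (rule obtain_neighbour_list[OF G, of "\<lambda>w. w \<in> H \<and> E v w"]) auto
    ultimately have "grp_step E (Idle H Ps) (Build H Ps {v} L)" by (rule grp_step.start)
    then show ?thesis using Idle by blast
  qed (use Idle in simp)
next
  case (Build H Ps Vk S)
  show ?thesis
  proof (cases S)
    case Nil
    have "grp_step E (Build H Ps Vk []) (Idle (H - Vk) (Ps @ [Vk]))" by (rule grp_step.finish)
    then show ?thesis using Build Nil by blast
  next
    case (Cons e S')
    obtain u p where e: "e = (u, p)" by fastforce
    have "\<exists>S''. grp_step E (Build H Ps Vk ((u, p) # S')) S''"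
    proof (cases "\<forall>w\<in>H. E u w \<and> w \<noteq> p \<longrightarrow> w \<notin> Vk")
      case True
      obtain L where L: "distinct L" "set L = {(w, u) | w. w \<in> H \<and> E u w \<and> w \<notin> insert u Vk}"
        by (rule obtain_neighbour_list[OF G, of "\<lambda>w. w \<in> H \<and> E u w \<and> w \<notin> insert u Vk"]) auto
      show ?thesis using grp_step.pop_add[where E = E and H = H and Vk = Vk, OF True L] by blast
    next
      case False
      show ?thesis using grp_step.pop_skip[where E = E and H = H and Vk = Vk, OF False] by blast
    qed
    then show ?thesis using Build Cons e by blast
  qed
qed

lemma grp_invariant_initial: "grp_invariant V E (Idle V [])"
  by (simp add: radial_partition_Nil)

lemma grp_invariant_reachable:
  assumes "simple_graph V E" "(grp_step E)\<^sup>*\<^sup>* (Idle V []) s"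
  shows "grp_invariant V E s"
  using assms(2)
proof (induction rule: rtranclp_induct)
  case base
  show ?case by (rule grp_invariant_initial)
next
  case (step s t)
  then show ?case using grp_step_invariant[OF assms(1)] by blast
qed

lemma grp_final_radial_partition:
  assumes "simple_graph V E" "(grp_step E)\<^sup>*\<^sup>* (Idle V []) (Idle {} Ps)"
  shows "radial_partition E V Ps"
  using grp_invariant_reachable[OF assms] by simp

theorem theorem1:
  fixes V :: "'a set" and E :: "'a \<Rightarrow> 'a \<Rightarrow> bool"
  assumes "simple_graph V E"
    and "V \<noteq> {}"
    and "induced_connected E V"
  shows "(\<nexists>f. f 0 = Idle V [] \<and> (\<forall>i. grp_step E (f i) (f (Suc i))))
    \<and> (\<forall>s. (grp_step E)\<^sup>*\<^sup>* (Idle V []) s \<longrightarrow> (\<exists>t. grp_step E s t) \<or> (\<exists>Ps. s = Idle {} Ps))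
    \<and> (\<forall>Ps. (grp_step E)\<^sup>*\<^sup>* (Idle V []) (Idle {} Ps) \<longrightarrow>
          is_partition_list V Ps \<and> (\<forall>P\<in>set Ps. induced_tree E P))"
proof (intro conjI allI impI)
  show "\<nexists>f. f 0 = Idle V [] \<and> (\<forall>i. grp_step E (f i) (f (Suc i)))"
    using wf_grp_less grp_invariant_initial
    by (rule no_infinite_run_if_decreasing[where I = "grp_invariant V E"])
      (blast intro: grp_step_invariant[OF assms(1)] grp_step_decreasing[OF assms(1)])
next
  fix s
  show "(\<exists>t. grp_step E s t) \<or> (\<exists>Ps. s = Idle {} Ps)"
    by (rule grp_progress[OF assms(1)])
next
  fix Ps
  assume "(grp_step E)\<^sup>*\<^sup>* (Idle V []) (Idle {} Ps)"
  then have "radial_partition E V Ps" by (rule grp_final_radial_partition[OF assms(1)])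
  then show "is_partition_list V Ps" "\<forall>P\<in>set Ps. induced_tree E P"
    unfolding radial_partition_def by blast+
qed

end
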